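(* Let $A$ be a semiprime non-commutative associative algebra over $\Phi$ with center $Z$. Then: (i) $\mathrm{Der}(A)/I_Z$ is a strongly non-degenerate Lie algebra; (ii) if $Z$ contains no non-zero associative ideals of $A$ (in particular, if $A$ is prime), then $\mathrm{Der}(A)$ is a strongly non-degenerate Lie algebra.
   Context: $\Phi$ is a unital commutative ring in which $2$ and $3$ are invertible; all algebras are $\Phi$-modules. $\mathrm{Der}(A)$ is the Lie algebra (under $[\delta,\mu]=\delta\mu-\mu\delta$) of all associative derivations of $A$. $Z$ is the center of $A$ and $I_Z=\{\delta\in\mathrm{Der}(A): \delta(A)\subseteq Z\}$. An element $x$ of a Lie algebra $M$ is an absolute zero divisor if $[x,[x,M]]=0$; $M$ is strongly non-degenerate if it has no non-zero absolute zero divisors. *)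

theory Defs
  imports Main
begin

text \<open>An associative (not necessarily unital) algebra over a commutative unital ring
  of scalars 'k: the carrier is the whole type 'a (a non-unital ring, class ring),
  and smul is the scalar action making it a 'k-module with bilinear multiplication.\<close>

definition assoc_algebra :: "('k::comm_ring_1 \<Rightarrow> 'a::ring \<Rightarrow> 'a) \<Rightarrow> bool" where
  "assoc_algebra smul \<longleftrightarrow>
     (\<forall>c x y. smul c (x + y) = smul c x + smul c y) \<and>
     (\<forall>c d x. smul (c + d) x = smul c x + smul d x) \<and>
     (\<forall>c d x. smul (c * d) x = smul c (smul d x)) \<and>
     (\<forall>x. smul 1 x = x) \<and>
     (\<forall>c x y. smul c (x * y) = smul c x * y) \<and>
     (\<forall>c x y. smul c (x * y) = x * smul c y)"

definition two_three_invertible :: "'k::comm_ring_1 itself \<Rightarrow> bool" where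
  "two_three_invertible _ \<longleftrightarrow> (\<exists>u::'k. 2 * u = 1) \<and> (\<exists>v::'k. 3 * v = 1)"

definition alg_ideal :: "('k \<Rightarrow> 'a::ring \<Rightarrow> 'a) \<Rightarrow> 'a set \<Rightarrow> bool" where
  "alg_ideal smul I \<longleftrightarrow> 0 \<in> I \<and> (\<forall>x\<in>I. \<forall>y\<in>I. x + y \<in> I) \<and> (\<forall>x\<in>I. - x \<in> I) \<and>
     (\<forall>c. \<forall>x\<in>I. smul c x \<in> I) \<and> (\<forall>x\<in>I. \<forall>a. a * x \<in> I \<and> x * a \<in> I)"

text \<open>Semiprime: no non-zero ideal with zero square (I^2 = 0 iff all products vanish).\<close>
definition semiprime :: "('k \<Rightarrow> 'a::ring \<Rightarrow> 'a) \<Rightarrow> bool" where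
  "semiprime smul \<longleftrightarrow>
     (\<forall>I. alg_ideal smul I \<and> (\<forall>x\<in>I. \<forall>y\<in>I. x * y = 0) \<longrightarrow> I = {0})"

definition noncommutative :: "'a::ring itself \<Rightarrow> bool" where
  "noncommutative _ \<longleftrightarrow> (\<exists>x y::'a. x * y \<noteq> y * x)"

definition center :: "'a::ring set" where
  "center = {z. \<forall>x. z * x = x * z}"

definition Der :: "('k \<Rightarrow> 'a::ring \<Rightarrow> 'a) \<Rightarrow> ('a \<Rightarrow> 'a) set" where
  "Der smul = {d. (\<forall>x y. d (x + y) = d x + d y) \<and> (\<forall>c x. d (smul c x) = smul c (d x)) \<and>
                  (\<forall>x y. d (x * y) = d x * y + x * d y)}"

definition lie_br :: "('a::ring \<Rightarrow> 'a) \<Rightarrow> ('a \<Rightarrow> 'a) \<Rightarrow> ('a \<Rightarrow> 'a)" where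
  "lie_br d m = (\<lambda>x. d (m x) - m (d x))"

definition I_Z :: "('k \<Rightarrow> 'a::ring \<Rightarrow> 'a) \<Rightarrow> ('a \<Rightarrow> 'a) set" where
  "I_Z smul = {d \<in> Der smul. range d \<subseteq> center}"

text \<open>Der(A)/I_Z strongly non-degenerate: the coset of d is an absolute zero divisor
  iff [d,[d,m]] \<in> I_Z for all m \<in> Der(A); it must then be zero, i.e. d \<in> I_Z.\<close>
definition quot_strongly_nondeg :: "('k \<Rightarrow> 'a::ring \<Rightarrow> 'a) \<Rightarrow> bool" where
  "quot_strongly_nondeg smul \<longleftrightarrow>
     (\<forall>d \<in> Der smul. (\<forall>m \<in> Der smul. lie_br d (lie_br d m) \<in> I_Z smul) \<longrightarrow> d \<in> I_Z smul)"

definition Der_strongly_nondeg :: "('k \<Rightarrow> 'a::ring \<Rightarrow> 'a) \<Rightarrow> bool" where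
  "Der_strongly_nondeg smul \<longleftrightarrow>
     (\<forall>d \<in> Der smul. (\<forall>m \<in> Der smul. lie_br d (lie_br d m) = (\<lambda>_. 0)) \<longrightarrow> d = (\<lambda>_. 0))"

end

theory Submission imports Defs begin

(* Write ad a = [a, -] for the inner derivation of a.  The heart of the proof is a
   Herstein-type result: in a semiprime algebra with 1/2 and 1/3, a derivation D whose
   square D^2 maps A into the centre Z already maps A into Z.  It is derived from the
   basic semiprimeness fact "a A a = 0 implies a = 0" (proved via annihilator ideals)
   by a sequence of identities obtained from the centrality of D^2(xy).

   (i)  If [d,[d,m]] lies in I_Z for all derivations m, take m = ad a: then
        [d,[d,ad a]] = ad (d^2 a) has central values, which in a semiprime algebra forces
        d^2 a to be central; the Herstein-type result gives d(A) in Z, i.e. d in I_Z.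
   (ii) If moreover [d,[d,Der A]] = 0, then d in I_Z by (i).  For a central-valued d,
        every d^2 x lies in the central ideal {a in Z. a [A,A] = 0}, which is zero by
        hypothesis; so d^2 = 0, then (d x)^2 = 0 with d x central, whence d = 0. *)

definition ad :: "'a::ring \<Rightarrow> 'a \<Rightarrow> 'a" where
  "ad a b = a * b - b * a"

text \<open>The central elements annihilating all commutators; in part (ii) this central
  ideal receives the values of d^2 for a central-valued derivation d.\<close>
definition central_annihilator :: "'a::ring set" where
  "central_annihilator = {a \<in> center. \<forall>x y. a * ad x y = 0}"

lemma center_comm: "c \<in> center \<Longrightarrow> c * x = x * c"
  by (simp add: center_def)

lemma center_swap: "c \<in> center \<Longrightarrow> a * (c * b) = c * (a * b)"
  using center_comm by (metis mult.assoc)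

lemma center_mult: "c \<in> center \<Longrightarrow> d \<in> center \<Longrightarrow> c * d \<in> center"
proof -
  assume c: "c \<in> center" and d: "d \<in> center"
  have "c * d * x = x * (c * d)" for x
    using center_comm[OF d, of x] center_swap[OF c, of x d] by (simp add: mult.assoc)
  thus ?thesis by (simp add: center_def)
qed

lemma center_add: "c \<in> center \<Longrightarrow> d \<in> center \<Longrightarrow> c + d \<in> center"
  unfolding center_def by (simp add: algebra_simps)

lemma ad_central: "c \<in> center \<Longrightarrow> ad c x = 0"
  using center_comm[of c x] by (simp add: ad_def)

lemma central_if_ad_zero: "(\<And>x. ad c x = 0) \<Longrightarrow> c \<in> center"
  by (simp add: ad_def center_def)

lemma ad_add: "ad (a + b) r = ad a r + ad b r"
  by (simp add: ad_def algebra_simps)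

lemma ad_mult: "ad (a * b) r = a * ad b r + ad a r * b"
  by (simp add: ad_def algebra_simps)

lemma ad_central_left: "c \<in> center \<Longrightarrow> ad (c * b) r = c * ad b r"
  using center_swap[of c r b] by (simp add: ad_def algebra_simps)

lemma ad_central_right: "c \<in> center \<Longrightarrow> ad (b * c) r = c * ad b r"
proof -
  assume c: "c \<in> center"
  have "b * c * r = c * (b * r)" and "r * (b * c) = c * (r * b)"
    using center_comm[OF c] by (metis mult.assoc)+
  thus ?thesis by (simp add: ad_def algebra_simps)
qed

context
  fixes smul :: "'k::comm_ring_1 \<Rightarrow> 'a::ring \<Rightarrow> 'a"
  assumes alg: "assoc_algebra smul"
begin

lemma smul_add: "smul c (x + y) = smul c x + smul c y"
  using alg unfolding assoc_algebra_def by blast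

lemma smul_plus: "smul (c + d) x = smul c x + smul d x"
  using alg unfolding assoc_algebra_def by blast

lemma smul_one: "smul 1 x = x"
  using alg unfolding assoc_algebra_def by blast

lemma smul_mult_left: "smul c (x * y) = smul c x * y"
  using alg unfolding assoc_algebra_def by blast

lemma smul_mult_right: "smul c (x * y) = x * smul c y"
  using alg unfolding assoc_algebra_def by blast

lemma smul_zero: "smul c 0 = 0"
  using smul_add[of c 0 0] by simp

lemma smul_diff: "smul c (x - y) = smul c x - smul c y"
proof -
  have "smul c (x - y) + smul c y = smul c x"
    using smul_add[of c "x - y" y] by simp
  thus ?thesis by (simp add: eq_diff_eq)
qed

text \<open>Division by 2 and by 3: the only use of the hypothesis on the scalars.\<close>

lemma double_zero:
  assumes tt: "two_three_invertible TYPE('k)" and h: "(x::'a) + x = 0"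
  shows "x = 0"
proof -
  obtain u :: 'k where "2 * u = 1" using tt unfolding two_three_invertible_def by blast
  hence "u + u = 1" by (simp only: mult_2)
  hence "x = smul (u + u) x" by (simp only: smul_one)
  also have "\<dots> = smul u (x + x)" by (simp only: smul_plus smul_add)
  finally show ?thesis by (simp add: h smul_zero)
qed

lemma triple_zero:
  assumes tt: "two_three_invertible TYPE('k)" and h: "(x::'a) + x + x = 0"
  shows "x = 0"
proof -
  obtain v :: 'k where "3 * v = 1" using tt unfolding two_three_invertible_def by blast
  hence "v + v + v = 1" by (simp add: algebra_simps)
  hence "x = smul (v + v + v) x" by (simp only: smul_one)
  also have "\<dots> = smul v (x + x + x)" by (simp only: smul_plus smul_add)
  finally show ?thesis by (simp add: h smul_zero)
qed

lemma right_annihilator_ideal: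
  assumes closed: "\<And>x r. x \<in> X \<Longrightarrow> x * r \<in> X"
  shows "alg_ideal smul {y. \<forall>x\<in>X. x * y = 0}"
  unfolding alg_ideal_def
  using closed by (auto simp: distrib_left smul_mult_right[symmetric] smul_zero
      mult.assoc[symmetric])

lemma left_annihilator_ideal:
  assumes closed: "\<And>y r. y \<in> Y \<Longrightarrow> r * y \<in> Y"
  shows "alg_ideal smul {x. \<forall>y\<in>Y. x * y = 0}"
  unfolding alg_ideal_def
  using closed by (auto simp: distrib_right smul_mult_left[symmetric] smul_zero mult.assoc)

lemma ideal_Int: "alg_ideal smul I \<Longrightarrow> alg_ideal smul J \<Longrightarrow> alg_ideal smul (I \<inter> J)"
  unfolding alg_ideal_def Int_iff by (intro conjI ballI allI; elim conjE IntE; simp)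

text \<open>Semiprimeness for sets: if S A^1 S = 0, then S = 0.  The ideal N of elements
  killed from the left by S A^1 and its left annihilator M both contain S, and the
  ideal M \<inter> N has zero square.\<close>

lemma semiprime_zero_set:
  fixes S :: "'a set"
  assumes sp: "semiprime smul"
    and zero: "\<And>u v r. u \<in> S \<Longrightarrow> v \<in> S \<Longrightarrow> u * v = 0 \<and> u * r * v = 0"
    and u: "u \<in> S"
  shows "u = 0"
proof -
  define X where "X = S \<union> {u * r | u r. u \<in> S}"
  define N where "N = {y. \<forall>x\<in>X. x * y = 0}"
  define M where "M = {x. \<forall>y\<in>N. x * y = 0}"
  have "x * r \<in> X" if "x \<in> X" for x r
    using that mult.assoc unfolding X_def by blast
  hence N: "alg_ideal smul N"
    unfolding N_def by (rule right_annihilator_ideal)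
  have M: "alg_ideal smul M"
    unfolding M_def by (rule left_annihilator_ideal) (use N in \<open>simp add: alg_ideal_def\<close>)
  have "S \<subseteq> N" using zero unfolding N_def X_def by auto
  hence "S \<subseteq> M \<inter> N" unfolding M_def N_def X_def by auto
  moreover have "M \<inter> N = {0}"
    using sp ideal_Int[OF M N] unfolding semiprime_def M_def by blast
  ultimately show ?thesis using u by blast
qed

lemma semiprime_sandwich_zero:
  fixes a :: 'a
  assumes sp: "semiprime smul" and h: "\<And>s. a * s * a = 0"
  shows "a = 0"
proof -
  have ra: "r * a = 0" for r
  proof (rule semiprime_zero_set[OF sp, of "{x. \<exists>r. x = r * a}"])
    fix u v t assume "u \<in> {x. \<exists>r. x = r * a}" "v \<in> {x. \<exists>r. x = r * a}"
    then obtain p q where "u = p * a" "v = q * a" by blast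
    moreover have "p * a * (q * a) = p * (a * q * a)" by (simp add: mult.assoc)
    moreover have "p * a * t * (q * a) = p * (a * (t * q) * a)" by (simp add: mult.assoc)
    ultimately show "u * v = 0 \<and> u * t * v = 0" by (simp add: h)
  qed auto
  show ?thesis
    by (rule semiprime_zero_set[OF sp, of "{a}"]) (auto simp: h ra)
qed

lemma central_square_zero:
  fixes c :: 'a
  assumes sp: "semiprime smul" and c: "c \<in> center" and h: "c * c = 0"
  shows "c = 0"
proof (rule semiprime_sandwich_zero[OF sp])
  fix s
  have "c * s * c = s * (c * c)" using center_comm[OF c, of s] by (simp add: mult.assoc)
  thus "c * s * c = 0" using h by simp
qed

lemma central_cancel:
  fixes c :: 'a
  assumes sp: "semiprime smul" and c: "c \<in> center" and h: "c * (c * u) = 0"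
  shows "c * u = 0"
proof (rule semiprime_sandwich_zero[OF sp])
  fix s
  have "c * u * s * (c * u) = c * (c * u) * s * u"
    by (metis mult.assoc center_comm[OF c])
  thus "c * u * s * (c * u) = 0" using h by simp
qed

text \<open>If all commutators [b, x] are central, then b is central: with c = [b, x] one has
  [b, x b] = c b central, whence c [b, r] = 0 for all r, in particular c^2 = 0.\<close>

lemma central_if_ad_central:
  fixes b :: 'a
  assumes sp: "semiprime smul" and h: "\<And>x. ad b x \<in> center"
  shows "b \<in> center"
proof (rule central_if_ad_zero)
  fix x
  define c where "c = ad b x"
  have c: "c \<in> center" using h c_def by simp
  have "ad b (x * b) = c * b" unfolding c_def ad_def by (simp add: algebra_simps)
  hence cb: "c * b \<in> center" using h by metis
  have "c * b * x = x * (c * b)" using center_comm[OF cb] .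
  also have "\<dots> = c * (x * b)" by (rule center_swap[OF c])
  finally have "c * c = 0" unfolding c_def ad_def by (simp add: algebra_simps)
  thus "ad b x = 0" using central_square_zero[OF sp c] c_def by simp
qed

lemma Der_add: "D \<in> Der smul \<Longrightarrow> D (x + y) = D x + D y"
  unfolding Der_def by blast

lemma Der_mult: "D \<in> Der smul \<Longrightarrow> D (x * y) = D x * y + x * D y"
  unfolding Der_def by blast

lemma Der_diff: "D \<in> Der smul \<Longrightarrow> D (x - y) = D x - D y"
  using Der_add[of D "x - y" y] by (simp add: eq_diff_eq)

lemma ad_Der: "ad a \<in> Der smul"
  unfolding Der_def ad_def
  by (auto simp: algebra_simps smul_diff smul_mult_left smul_mult_right[symmetric])

lemma lie_br_ad: "D \<in> Der smul \<Longrightarrow> lie_br D (ad a) = ad (D a)"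
  unfolding lie_br_def ad_def by (rule ext) (simp add: Der_diff Der_mult algebra_simps)

context
  fixes D :: "'a \<Rightarrow> 'a"
  assumes sp: "semiprime smul" and tt: "two_three_invertible TYPE('k)"
    and d: "D \<in> Der smul" and square_central: "\<And>x. D (D x) \<in> center"
begin

lemma D_center: assumes c: "c \<in> center" shows "D c \<in> center"
proof -
  have "D c * r = r * D c" for r
  proof -
    have "D (c * r) = D (r * c)" using center_comm[OF c, of r] by simp
    hence "D c * r + c * D r = D r * c + r * D c" using Der_mult[OF d] by simp
    thus ?thesis using center_comm[OF c, of "D r"] by simp
  qed
  thus ?thesis by (simp add: center_def)
qed

text \<open>The basic identity: commutator of the central element D^2(xy) with r.\<close>
lemma square_identity:
  "D (D x) * ad y r + (ad (D x * D y) r + ad (D x * D y) r) + D (D y) * ad x r = 0"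
proof -
  have expand: "D (D (x * y)) = D (D x) * y + (D x * D y + D x * D y) + x * D (D y)"
    by (simp add: Der_mult[OF d] Der_add[OF d] algebra_simps)
  have "0 = ad (D (D (x * y))) r" using ad_central[OF square_central] by simp
  also have "\<dots> = ad (D (D x) * y) r + (ad (D x * D y) r + ad (D x * D y) r) + ad (x * D (D y)) r"
    by (simp only: expand ad_add)
  also have "\<dots> = D (D x) * ad y r + (ad (D x * D y) r + ad (D x * D y) r) + D (D y) * ad x r"
    by (simp only: ad_central_left[OF square_central] ad_central_right[OF square_central])
  finally show ?thesis by simp
qed

lemma central_argument: assumes w: "w \<in> center"
  shows "D (D w) * ad x r = 0" and "D w * ad (D x) r = 0"
proof -
  have E: "(D w * ad (D x) r + D w * ad (D x) r) + D (D w) * ad x r = 0" for x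
    using square_identity[of x w r] ad_central[OF w]
    by (simp add: ad_central_right[OF D_center[OF w]])
  have "D (D w) * ad (D y) r = 0" for y
    using E[of "D y"] ad_central[OF square_central] by simp
  hence "D (D w) * (D w * ad (D x) r) = 0"
    using center_swap[OF square_central, of "D w" w "ad (D x) r"] by simp
  moreover have "D (D w) * (D w * ad (D x) r + D w * ad (D x) r) + D (D w) * (D (D w) * ad x r) = 0"
    using E[of x] by (metis distrib_left mult_zero_right)
  ultimately have "D (D w) * (D (D w) * ad x r) = 0" by (simp add: distrib_left)
  thus b: "D (D w) * ad x r = 0" by (rule central_cancel[OF sp square_central])
  show "D w * ad (D x) r = 0"
    by (rule double_zero[OF tt]) (use E[of x] b in simp)
qed

lemma square_identity_D: "D (D (D x)) * ad y r + (D (D x) * ad (D y) r + D (D x) * ad (D y) r)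
    + D (D y) * ad (D x) r = 0"
  using square_identity[of "D x" y r] ad_central_left[OF square_central, of x "D y" r] by simp

text \<open>D^3 x is central and kills [D y, r] by the previous lemma; multiplying the
  identity above by D^3 x leaves (D^3 x)^2 [y, r] = 0.\<close>
lemma cube_annihilates: "D (D (D x)) * ad y r = 0"
proof -
  let ?t = "D (D (D x))"
  have t: "?t \<in> center" by (rule D_center[OF square_central])
  have h: "?t * ad (D y) r = 0" "?t * ad (D x) r = 0"
    using central_argument(2)[OF square_central] by auto
  have "?t * (D (D x) * ad (D y) r) = 0"
    using center_swap[OF square_central, of ?t x "ad (D y) r"] h by simp
  moreover have "?t * (D (D y) * ad (D x) r) = 0"
    using center_swap[OF square_central, of ?t y "ad (D x) r"] h by simp
  moreover have "?t * (?t * ad y r) + (?t * (D (D x) * ad (D y) r) + ?t * (D (D x) * ad (D y) r))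
    + ?t * (D (D y) * ad (D x) r) = 0"
    using square_identity_D[of x y r] by (metis distrib_left mult_zero_right)
  ultimately have "?t * (?t * ad y r) = 0" by simp
  thus ?thesis by (rule central_cancel[OF sp t])
qed

text \<open>Here division by 3 is used: p and q below satisfy 2p + q = 0 = 2q + p.\<close>
lemma square_annihilates_D: "D (D x) * ad (D y) r = 0"
proof -
  let ?p = "D (D x) * ad (D y) r" and ?q = "D (D y) * ad (D x) r"
  have 1: "?p + ?p + ?q = 0"
    using square_identity_D[of x y r] cube_annihilates[of x y r] by (simp add: add.assoc)
  have 2: "?q + ?q + ?p = 0"
    using square_identity_D[of y x r] cube_annihilates[of y x r] by (simp add: add.assoc)
  have "?p + ?p + ?p = (?p + ?p + ?q) + (?p + ?p + ?q) - (?q + ?q + ?p)"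
    by (simp add: algebra_simps)
  hence "?p + ?p + ?p = 0" using 1 2 by simp
  thus ?thesis by (rule triple_zero[OF tt])
qed

text \<open>The basic identity with y = x, multiplied by D^2 x; the middle term vanishes since
  [D x D x, r] = D x [D x, r] + [D x, r] D x.\<close>
lemma square_annihilates_own: "D (D x) * ad x r = 0"
proof -
  have "D (D x) * ad (D x * D x) r
      = D x * (D (D x) * ad (D x) r) + (D (D x) * ad (D x) r) * D x"
    using center_swap[OF square_central, of "D x" x "ad (D x) r"]
    by (simp add: ad_mult distrib_left mult.assoc)
  hence DxDx: "D (D x) * ad (D x * D x) r = 0" using square_annihilates_D by simp
  have "D (D x) * (D (D x) * ad x r) + (D (D x) * ad (D x * D x) r + D (D x) * ad (D x * D x) r)
     + D (D x) * (D (D x) * ad x r) = 0"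
    using square_identity[of x x r] by (metis distrib_left mult_zero_right)
  hence "D (D x) * (D (D x) * ad x r) + D (D x) * (D (D x) * ad x r) = 0" using DxDx by simp
  hence "D (D x) * (D (D x) * ad x r) = 0" by (rule double_zero[OF tt])
  thus ?thesis by (rule central_cancel[OF sp square_central])
qed

text \<open>Linearising the previous lemma.\<close>
lemma square_annihilates: "D (D x) * ad y r = 0"
proof -
  have "D (D (x + y)) * ad (x + y) r = 0" by (rule square_annihilates_own)
  hence "(D (D x) + D (D y)) * (ad x r + ad y r) = 0" by (simp add: Der_add[OF d] ad_add)
  hence e: "D (D x) * ad y r + D (D y) * ad x r = 0"
    using square_annihilates_own[of x r] square_annihilates_own[of y r]
    by (simp add: algebra_simps)
  have "D (D x) * (D (D y) * ad x r) = 0"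
    using center_swap[OF square_central, of "D (D x)" y "ad x r"] square_annihilates_own[of x r]
    by simp
  moreover have "D (D x) * (D (D x) * ad y r) + D (D x) * (D (D y) * ad x r) = 0"
    using e by (metis distrib_left mult_zero_right)
  ultimately have "D (D x) * (D (D x) * ad y r) = 0" by simp
  thus ?thesis by (rule central_cancel[OF sp square_central])
qed

text \<open>Now the basic identity reduces to 2 [D x D y, r] = 0.\<close>
lemma D_products_central: "D x * D y \<in> center"
proof (rule central_if_ad_zero)
  fix r
  have "ad (D x * D y) r + ad (D x * D y) r = 0"
    using square_identity[of x y r] square_annihilates by simp
  thus "ad (D x * D y) r = 0" by (rule double_zero[OF tt])
qed

text \<open>Commuting the central element D x D (y D t) with r.\<close>
lemma D_products_annihilate: "D x * D y * ad (D t) r = 0"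
proof -
  have c: "D x * D (y * D t) \<in> center" by (rule D_products_central)
  have e: "D x * D (y * D t) = (D x * D y) * D t + D x * y * D (D t)"
    by (simp add: Der_mult[OF d] algebra_simps)
  have "0 = ad (D x * D (y * D t)) r" using ad_central[OF c] by simp
  also have "\<dots> = (D x * D y) * ad (D t) r + D (D t) * ad (D x * y) r"
    by (simp only: e ad_add ad_central_left[OF D_products_central]
        ad_central_right[OF square_central])
  also have "\<dots> = (D x * D y) * ad (D t) r" using square_annihilates by simp
  finally show ?thesis by simp
qed

text \<open>Absorbing the central factor D x D y into s gives D x A D s [D t, r] = 0.\<close>
lemma D_sandwich_annihilates: "D x * y * D s * ad (D t) r = 0"
proof -
  have "0 = D x * D (y * s) * ad (D t) r" using D_products_annihilate by simp
  also have "\<dots> = (D x * D y) * s * ad (D t) r + D x * y * D s * ad (D t) r"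
    by (simp add: Der_mult[OF d] algebra_simps)
  also have "(D x * D y) * s = s * (D x * D y)" using center_comm[OF D_products_central] .
  finally show ?thesis using D_products_annihilate by (simp add: mult.assoc)
qed

text \<open>Hence u = D s [D t, r] satisfies u A u = 0, so u = 0 by semiprimeness.\<close>
lemma D_annihilates: "D s * ad (D t) r = 0"
proof (rule semiprime_sandwich_zero[OF sp])
  fix a
  have "D s * ad (D t) r * a * (D s * ad (D t) r) = D s * (ad (D t) r * a) * D s * ad (D t) r"
    by (simp add: mult.assoc)
  thus "D s * ad (D t) r * a * (D s * ad (D t) r) = 0" using D_sandwich_annihilates by simp
qed

text \<open>Expanding D (s a) [D t, r] = 0.\<close>
lemma D_left_sandwich_annihilates: "D s * a * ad (D t) r = 0"
proof -
  have "0 = D (s * a) * ad (D t) r" using D_annihilates by simp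
  also have "\<dots> = D s * a * ad (D t) r + s * (D a * ad (D t) r)"
    by (simp add: Der_mult[OF d] algebra_simps)
  finally show ?thesis using D_annihilates by simp
qed

text \<open>Finally v = [D x, r] satisfies v A v = 0, since v a v = D x (r a) v - r (D x a v).\<close>
lemma derivation_central: "D x \<in> center"
proof (rule central_if_ad_zero)
  fix r
  show "ad (D x) r = 0"
  proof (rule semiprime_sandwich_zero[OF sp])
    fix a
    have "ad (D x) r * a * ad (D x) r = D x * (r * a) * ad (D x) r - r * (D x * a * ad (D x) r)"
      by (simp add: ad_def algebra_simps)
    thus "ad (D x) r * a * ad (D x) r = 0" using D_left_sandwich_annihilates by simp
  qed
qed

end

lemma quot_strongly_nondeg_semiprime:
  assumes sp: "semiprime smul" and tt: "two_three_invertible TYPE('k)"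
  shows "quot_strongly_nondeg smul"
  unfolding quot_strongly_nondeg_def
proof (intro ballI impI)
  fix d assume d: "d \<in> Der smul" and zero_div: "\<forall>m\<in>Der smul. lie_br d (lie_br d m) \<in> I_Z smul"
  have "d (d a) \<in> center" for a
  proof (rule central_if_ad_central[OF sp])
    have "lie_br d (lie_br d (ad a)) \<in> I_Z smul" using zero_div ad_Der by blast
    hence "ad (d (d a)) \<in> I_Z smul" by (simp add: lie_br_ad[OF d])
    thus "ad (d (d a)) x \<in> center" for x unfolding I_Z_def by blast
  qed
  hence "d x \<in> center" for x by (rule derivation_central[OF sp tt d])
  thus "d \<in> I_Z smul" using d unfolding I_Z_def by blast
qed

lemma central_annihilator_ideal: "alg_ideal smul central_annihilator"
proof -
  have closed: "a * b \<in> central_annihilator \<and> b * a \<in> central_annihilator \<and>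
      smul c a \<in> central_annihilator \<and> - a \<in> central_annihilator"
    if "a \<in> central_annihilator" for a b c
  proof -
    have a: "a \<in> center" and a0: "\<And>x y. a * ad x y = 0"
      using that unfolding central_annihilator_def by auto
    have "a * b * x = x * (a * b)" for x
    proof -
      have "a * (b * x) = a * (x * b)"
        using a0[of b x] by (simp add: ad_def right_diff_distrib)
      thus ?thesis using center_swap[OF a, of x b] by (simp add: mult.assoc)
    qed
    moreover have "a * b * ad x y = b * (a * ad x y)" for x y
      using center_comm[OF a, of b] by (metis mult.assoc)
    ultimately have ab: "a * b \<in> central_annihilator"
      using a0 by (simp add: center_def central_annihilator_def)
    moreover have "b * a \<in> central_annihilator"
      using ab unfolding center_comm[OF a, of b, symmetric] .
    moreover have "smul c a * x = x * smul c a" for x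
      by (metis smul_mult_left smul_mult_right center_comm[OF a])
    moreover have "smul c a * ad x y = 0" for x y
      by (metis smul_mult_left smul_zero a0)
    moreover have "- a * x = x * - a" for x using center_comm[OF a, of x] by simp
    moreover have "- a * ad x y = 0" for x y using a0[of x y] by simp
    ultimately show ?thesis unfolding central_annihilator_def center_def by blast
  qed
  have "a + b \<in> central_annihilator"
    if "a \<in> central_annihilator" "b \<in> central_annihilator" for a b
    using that by (simp add: central_annihilator_def center_add distrib_right)
  moreover have "0 \<in> central_annihilator" by (simp add: central_annihilator_def center_def)
  ultimately show ?thesis unfolding alg_ideal_def using closed by blast
qed

lemma central_derivation_square_annihilates:
  assumes d: "d \<in> Der smul" and central: "\<And>x. d x \<in> center"
  shows "d (d x) * ad y r = 0"
proof -
  have "d (d x * y) = d (d x) * y + d x * d y" by (rule Der_mult[OF d])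
  hence "0 = ad (d (d x) * y) r + ad (d x * d y) r"
    using ad_central[OF central, of "d x * y" r] by (simp add: ad_add)
  thus ?thesis
    using ad_central_left[OF central] ad_central[OF center_mult[OF central central]] by simp
qed

text \<open>A central-valued derivation of square zero vanishes: (d x)^2 = d^2(x^2)/2 = 0.\<close>

lemma central_derivation_square_zero:
  assumes sp: "semiprime smul" and tt: "two_three_invertible TYPE('k)"
    and d: "d \<in> Der smul" and central: "\<And>x. d x \<in> center" and sq: "\<And>x. d (d x) = 0"
  shows "d x = 0"
proof -
  have "d (d (x * x)) = d (d x) * x + (d x * d x + d x * d x) + x * d (d x)"
    by (simp add: Der_mult[OF d] Der_add[OF d] algebra_simps)
  hence "d x * d x + d x * d x = 0" using sq by simp
  hence "d x * d x = 0" by (rule double_zero[OF tt])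
  thus ?thesis by (rule central_square_zero[OF sp central])
qed

lemma Der_strongly_nondeg_semiprime:
  assumes sp: "semiprime smul" and tt: "two_three_invertible TYPE('k)"
    and no_central: "\<forall>I. alg_ideal smul I \<and> I \<subseteq> center \<longrightarrow> I = {0}"
  shows "Der_strongly_nondeg smul"
  unfolding Der_strongly_nondeg_def
proof (intro ballI impI)
  fix d assume d: "d \<in> Der smul" and zero_div: "\<forall>m\<in>Der smul. lie_br d (lie_br d m) = (\<lambda>_. 0)"
  have "(\<lambda>_. 0) \<in> I_Z smul"
    unfolding I_Z_def Der_def center_def by (auto simp: smul_zero)
  hence "d \<in> I_Z smul"
    using quot_strongly_nondeg_semiprime[OF sp tt] d zero_div
    unfolding quot_strongly_nondeg_def by metis
  hence central: "d x \<in> center" for x unfolding I_Z_def by blast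
  have "(central_annihilator :: 'a set) \<subseteq> center"
    unfolding central_annihilator_def by blast
  hence ann_zero: "(central_annihilator :: 'a set) = {0}"
    by (rule no_central[rule_format, OF conjI[OF central_annihilator_ideal]])
  have "d (d x) \<in> central_annihilator" for x
    using central central_derivation_square_annihilates[OF d central]
    unfolding central_annihilator_def by blast
  hence "d (d x) = 0" for x using ann_zero by blast
  hence "d x = 0" for x by (rule central_derivation_square_zero[OF sp tt d central])
  thus "d = (\<lambda>_. 0)" by (rule ext)
qed

end

theorem theorem2p5:
  fixes smul :: "'k::comm_ring_1 \<Rightarrow> 'a::ring \<Rightarrow> 'a"
  assumes "two_three_invertible TYPE('k)"
    and "assoc_algebra smul"
    and "semiprime smul"
    and "noncommutative TYPE('a)"
  shows "quot_strongly_nondeg smul \<and>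
         ((\<forall>I. alg_ideal smul I \<and> I \<subseteq> center \<longrightarrow> I = {0}) \<longrightarrow> Der_strongly_nondeg smul)"
  using quot_strongly_nondeg_semiprime[OF assms(2,3,1)]
    Der_strongly_nondeg_semiprime[OF assms(2,3,1)] by blast

end
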